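(* In the linear setting described in the context, let $\mathbf P_t^s$ be defined by $\mathbf P_t^0=\mathbf P_t$ and $\mathbf P_t^{s+1}=\boldsymbol\theta_{t-s-1}^{-1}\mathbf P_t^s\boldsymbol\theta_{t-s-1}$ ($0\le s<t\le T$). Then for each $0\le s\le T$, $$\|\mathbf P_s^s-\mathbf P_0\|_2\le\big(1+\kappa(\overline{\boldsymbol\theta}_s)^2\big)\,\|\mathbf I-\overline{\boldsymbol\theta}_s^T\overline{\boldsymbol\theta}_s\|_2,$$ where $\overline{\boldsymbol\theta}_0=\mathbf I$ and $\overline{\boldsymbol\theta}_s=\boldsymbol\theta_{s-1}\cdots\boldsymbol\theta_0$ for $s\ge1$.
   Context: Linear setting: fix integers $1\le r\le d$ and $T\ge1$. For $t=0,\dots,T$, $Z^t\subset\mathbb{R}^d$ is an $r$-dimensional linear subspace and $\mathbf P_t$ is the orthogonal projection onto $Z^t$. For $t=0,\dots,T-1$, $\boldsymbol\theta_t\in\mathbb{R}^{d\times d}$ is invertible with $\boldsymbol\theta_tZ^t=Z^{t+1}$. $\|\cdot\|_2$ is the spectral norm and $\kappa(\mathbf A)=\|\mathbf A\|_2\|\mathbf A^{-1}\|_2$. *)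

theory Defs
  imports "HOL-Analysis.Analysis"
begin

definition spec_norm :: "real^'n^'m \<Rightarrow> real" where
  "spec_norm A = onorm (\<lambda>x. A *v x)"

definition cond_num :: "real^'n^'n \<Rightarrow> real" where
  "cond_num A = spec_norm A * spec_norm (matrix_inv A)"

definition is_orth_proj :: "real^'n^'n \<Rightarrow> (real^'n) set \<Rightarrow> bool" where
  "is_orth_proj P Z \<longleftrightarrow> (\<forall>x. P *v x \<in> Z \<and> (\<forall>z\<in>Z. (x - P *v x) \<bullet> z = 0))"

fun Pts :: "(nat \<Rightarrow> real^'n^'n) \<Rightarrow> (nat \<Rightarrow> real^'n^'n) \<Rightarrow> nat \<Rightarrow> nat \<Rightarrow> real^'n^'n" where
  "Pts \<theta> P t 0 = P t"
| "Pts \<theta> P t (Suc s) = matrix_inv (\<theta> (t - s - 1)) ** Pts \<theta> P t s ** \<theta> (t - s - 1)"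

fun thetabar :: "(nat \<Rightarrow> real^'n^'n) \<Rightarrow> nat \<Rightarrow> real^'n^'n" where
  "thetabar \<theta> 0 = mat 1"
| "thetabar \<theta> (Suc s) = \<theta> s ** thetabar \<theta> s"

end

theory Submission
  imports Defs
begin

text \<open>
  Write \<open>A\<close> for \<open>\<overline>\<theta>\<^sub>s\<close>, \<open>N = \<parallel>A\<parallel>\<close>, \<open>M = \<parallel>A\<^sup>-\<^sup>1\<parallel>\<close>,
  \<open>e = \<parallel>I - A\<^sup>TA\<parallel>\<close> and \<open>Q = A\<^sup>-\<^sup>1 P\<^sub>s A\<close>, so that \<open>P\<^sub>s\<^sup>s = Q\<close>.
  Since \<open>A\<close> maps \<open>Z\<^sub>0\<close> onto \<open>Z\<^sub>s\<close>, \<open>Q\<close> is an oblique projection onto \<open>Z\<^sub>0\<close> and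
  \<open>Q - P\<^sub>0 = Q (I - P\<^sub>0)\<close>. For \<open>x \<bottom> Z\<^sub>0\<close> and \<open>w = Q x \<in> Z\<^sub>0\<close> one has
  \<open>\<parallel>A w\<parallel>\<^sup>2 = \<langle>A x, A w\<rangle> = -\<langle>x, (I - A\<^sup>TA) w\<rangle>\<close>, which gives \<open>\<parallel>Q - P\<^sub>0\<parallel> \<le> M\<^sup>2 e\<close>;
  trivially also \<open>\<parallel>Q - P\<^sub>0\<parallel> \<le> N M\<close>. The first bound suffices when
  \<open>M\<^sup>2 \<le> 1 + (N M)\<^sup>2\<close>; otherwise \<open>A\<close> is far from an isometry, and the spectral
  estimates \<open>1 - N\<^sup>2 \<le> e\<close>, \<open>M\<^sup>2 (1 - e) \<le> 1\<close> force \<open>(1 + (N M)\<^sup>2) e \<ge> max 1 (N M)\<^sup>2 \<ge> N M\<close>.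
\<close>

lemma matrix_inv_right_left:
  fixes A :: "real^'n^'n"
  assumes "invertible A"
  shows matrix_inv_right: "A ** matrix_inv A = mat 1"
    and matrix_inv_left: "matrix_inv A ** A = mat 1"
proof -
  have "\<exists>A'. A ** A' = mat 1 \<and> A' ** A = mat 1"
    using assms unfolding invertible_def by auto
  hence "A ** matrix_inv A = mat 1 \<and> matrix_inv A ** A = mat 1"
    unfolding matrix_inv_def by (rule someI_ex)
  thus "A ** matrix_inv A = mat 1" "matrix_inv A ** A = mat 1" by auto
qed

lemma matrix_inv_unique:
  fixes A C :: "real^'n^'n"
  assumes "invertible A" "C ** A = mat 1"
  shows "matrix_inv A = C"
proof -
  have "C = C ** (A ** matrix_inv A)" using matrix_inv_right[OF assms(1)] by simp
  also have "\<dots> = matrix_inv A" using assms(2) by (simp add: matrix_mul_assoc)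
  finally show ?thesis by simp
qed

lemma matrix_inv_mat_1: "matrix_inv (mat 1 :: real^'n^'n) = mat 1"
  by (rule matrix_inv_unique) (auto simp: invertible_def)

lemma matrix_inv_mult:
  fixes A B :: "real^'n^'n"
  assumes "invertible A" "invertible B"
  shows "matrix_inv (A ** B) = matrix_inv B ** matrix_inv A"
proof (rule matrix_inv_unique)
  show "invertible (A ** B)" using assms by (rule invertible_mult)
  have "matrix_inv B ** matrix_inv A ** (A ** B) = matrix_inv B ** (matrix_inv A ** A) ** B"
    by (simp add: matrix_mul_assoc)
  also have "\<dots> = mat 1" using matrix_inv_left[OF assms(1)] matrix_inv_left[OF assms(2)] by simp
  finally show "matrix_inv B ** matrix_inv A ** (A ** B) = mat 1" .
qed

lemma matrix_inv_mult_vec_cancel: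
  fixes A :: "real^'n^'n"
  assumes "invertible A"
  shows "matrix_inv A *v (A *v x) = x" and "A *v (matrix_inv A *v x) = x"
  using matrix_inv_left[OF assms] matrix_inv_right[OF assms]
  by (simp_all add: matrix_vector_mul_assoc)

lemma spec_norm_mult_vec_le: "norm (A *v x) \<le> spec_norm A * norm x"
  unfolding spec_norm_def by (rule onorm[OF matrix_vector_mul_bounded_linear])

lemma spec_norm_nonneg: "0 \<le> spec_norm A"
  unfolding spec_norm_def by (rule onorm_pos_le[OF matrix_vector_mul_bounded_linear])

lemma spec_norm_le: "(\<And>x. norm (A *v x) \<le> b * norm x) \<Longrightarrow> spec_norm A \<le> b"
  unfolding spec_norm_def by (rule onorm_le)

lemma inner_matrix_vector_transpose: "(A *v v) \<bullet> (w :: real^'n) = v \<bullet> (transpose A *v w)"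
  by (metis dot_lmul_matrix inner_commute transpose_matrix_vector)

lemma inner_gram_defect:
  fixes A :: "real^'n^'n"
  shows "x \<bullet> ((mat 1 - transpose A ** A) *v x) = (norm x)\<^sup>2 - (norm (A *v x))\<^sup>2"
  by (simp add: matrix_vector_mult_diff_rdistrib matrix_vector_mul_assoc inner_diff_right
      power2_norm_eq_inner inner_matrix_vector_transpose)

lemma inner_le_spec_norm:
  fixes A :: "real^'n^'n"
  shows "x \<bullet> (A *v y) \<le> spec_norm A * norm x * norm y"
proof -
  have "x \<bullet> (A *v y) \<le> norm x * norm (A *v y)" by (rule Cauchy_Schwarz_ineq2[THEN abs_le_D1])
  also have "\<dots> \<le> norm x * (spec_norm A * norm y)"
    by (simp add: mult_left_mono spec_norm_mult_vec_le)
  finally show ?thesis by (simp add: algebra_simps)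
qed

lemma norm_sq_le_gram_defect:
  fixes A :: "real^'n^'n"
  shows "(norm x)\<^sup>2 - (norm (A *v x))\<^sup>2 \<le> spec_norm (mat 1 - transpose A ** A) * (norm x)\<^sup>2"
  using inner_le_spec_norm[of x "mat 1 - transpose A ** A" x]
  by (simp add: inner_gram_defect power2_eq_square)

lemma one_minus_spec_norm_sq_le:
  fixes A :: "real^'n^'n"
  shows "1 - (spec_norm A)\<^sup>2 \<le> spec_norm (mat 1 - transpose A ** A)"
proof -
  obtain u :: "real^'n" where u: "norm u = 1" using vector_choose_size[of 1] by auto
  have "(norm (A *v u))\<^sup>2 \<le> (spec_norm A)\<^sup>2"
    using spec_norm_mult_vec_le[of A u] u by (simp add: power_mono)
  thus ?thesis using norm_sq_le_gram_defect[of u A] u by simp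
qed

lemma spec_norm_matrix_inv_sq_le:
  fixes A :: "real^'n^'n"
  assumes "invertible A"
  defines "e \<equiv> spec_norm (mat 1 - transpose A ** A)"
  shows "(spec_norm (matrix_inv A))\<^sup>2 * (1 - e) \<le> 1"
proof (cases "e < 1")
  case False
  then have "(spec_norm (matrix_inv A))\<^sup>2 * (1 - e) \<le> 0" by (simp add: mult_nonneg_nonpos)
  then show ?thesis by simp
next
  case True
  define c where "c = 1 / sqrt (1 - e)"
  have c2: "c\<^sup>2 = 1 / (1 - e)" unfolding c_def using True by (simp add: power_divide)
  have "norm (matrix_inv A *v y) \<le> c * norm y" for y
  proof -
    have "(1 - e) * (norm (matrix_inv A *v y))\<^sup>2 \<le> (norm y)\<^sup>2"
      using norm_sq_le_gram_defect[of "matrix_inv A *v y" A]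
      by (simp add: matrix_inv_mult_vec_cancel[OF assms(1)] e_def algebra_simps)
    hence "(norm (matrix_inv A *v y))\<^sup>2 \<le> (norm y)\<^sup>2 / (1 - e)"
      using True by (simp add: field_simps)
    also have "\<dots> = (c * norm y)\<^sup>2" using c2 by (simp add: power_mult_distrib)
    finally have "(norm (matrix_inv A *v y))\<^sup>2 \<le> (c * norm y)\<^sup>2" .
    moreover have "0 \<le> c * norm y" using True unfolding c_def by simp
    ultimately show ?thesis by (rule power2_le_imp_le)
  qed
  hence "spec_norm (matrix_inv A) \<le> c" by (rule spec_norm_le)
  hence "(spec_norm (matrix_inv A))\<^sup>2 \<le> c\<^sup>2" by (rule power_mono[OF _ spec_norm_nonneg])
  thus ?thesis using c2 True by (simp add: field_simps)
qed

lemma is_orth_proj_in: "is_orth_proj P Z \<Longrightarrow> P *v x \<in> Z"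
  unfolding is_orth_proj_def by auto

lemma is_orth_proj_orthogonal: "is_orth_proj P Z \<Longrightarrow> z \<in> Z \<Longrightarrow> (x - P *v x) \<bullet> z = 0"
  unfolding is_orth_proj_def by auto

lemma is_orth_proj_fixes:
  assumes "is_orth_proj P Z" "subspace Z" "z \<in> Z"
  shows "P *v z = z"
proof -
  have "z - P *v z \<in> Z" using assms is_orth_proj_in by (metis subspace_diff)
  hence "(z - P *v z) \<bullet> (z - P *v z) = 0" using is_orth_proj_orthogonal[OF assms(1)] by blast
  thus ?thesis by simp
qed

lemma is_orth_proj_norms:
  assumes "is_orth_proj P Z"
  shows is_orth_proj_norm_le: "norm (P *v x) \<le> norm x"
    and is_orth_proj_norm_diff_le: "norm (x - P *v x) \<le> norm x"
    and is_orth_proj_norm_sq: "(norm (P *v x))\<^sup>2 = x \<bullet> (P *v x)"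
proof -
  have orth: "(x - P *v x) \<bullet> (P *v x) = 0"
    using is_orth_proj_orthogonal[OF assms is_orth_proj_in[OF assms]] .
  have "(norm x)\<^sup>2 = (norm (P *v x))\<^sup>2 + (norm (x - P *v x))\<^sup>2"
    using norm_add_Pythagorean[of "x - P *v x" "P *v x"] orth
    by (simp add: add.commute orthogonal_def)
  thus "norm (P *v x) \<le> norm x" "norm (x - P *v x) \<le> norm x"
    by (simp_all add: power2_le_imp_le)
  show "(norm (P *v x))\<^sup>2 = x \<bullet> (P *v x)"
    using orth by (simp add: inner_diff_left power2_norm_eq_inner)
qed

subsection \<open>Pulling a projection back along an invertible map\<close>

context
  fixes A P Q :: "real^'n^'n" and Z W :: "(real^'n) set"
  assumes inv: "invertible A" and subspace_W: "subspace W"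
    and proj_P: "is_orth_proj P Z" and proj_Q: "is_orth_proj Q W"
    and image: "(\<lambda>x. A *v x) ` Z = W"
begin

lemma pullback_proj_diff_apply:
  "(matrix_inv A ** Q ** A - P) *v x = matrix_inv A *v (Q *v (A *v (x - P *v x)))"
proof -
  have "A *v (P *v x) \<in> W" using image is_orth_proj_in[OF proj_P] by blast
  hence "Q *v (A *v (x - P *v x)) = Q *v (A *v x) - A *v (P *v x)"
    using is_orth_proj_fixes[OF proj_Q subspace_W] by (simp add: matrix_vector_mult_diff_distrib)
  hence "matrix_inv A *v (Q *v (A *v (x - P *v x))) = matrix_inv A *v (Q *v (A *v x)) - P *v x"
    by (simp add: matrix_vector_mult_diff_distrib matrix_inv_mult_vec_cancel[OF inv])
  thus ?thesis
    by (simp add: matrix_vector_mult_diff_rdistrib matrix_vector_mul_assoc matrix_mul_assoc)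
qed

lemma spec_norm_pullback_proj_diff_le_cond:
  "spec_norm (matrix_inv A ** Q ** A - P) \<le> spec_norm A * spec_norm (matrix_inv A)"
proof (rule spec_norm_le)
  fix x
  let ?M = "spec_norm (matrix_inv A)" and ?N = "spec_norm A" and ?v = "x - P *v x"
  have "norm (matrix_inv A *v (Q *v (A *v ?v))) \<le> ?M * norm (Q *v (A *v ?v))"
    by (rule spec_norm_mult_vec_le)
  also have "\<dots> \<le> ?M * norm (A *v ?v)"
    by (rule mult_left_mono[OF is_orth_proj_norm_le[OF proj_Q] spec_norm_nonneg])
  also have "\<dots> \<le> ?M * (?N * norm ?v)"
    by (rule mult_left_mono[OF spec_norm_mult_vec_le spec_norm_nonneg])
  also have "\<dots> \<le> ?M * (?N * norm x)"
    by (intro mult_left_mono is_orth_proj_norm_diff_le[OF proj_P] spec_norm_nonneg)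
  finally show "norm ((matrix_inv A ** Q ** A - P) *v x) \<le> ?N * ?M * norm x"
    unfolding pullback_proj_diff_apply by (simp only: mult_ac)
qed

lemma spec_norm_pullback_proj_diff_le_gram:
  "spec_norm (matrix_inv A ** Q ** A - P)
     \<le> (spec_norm (matrix_inv A))\<^sup>2 * spec_norm (mat 1 - transpose A ** A)"
proof (rule spec_norm_le)
  fix x
  let ?M = "spec_norm (matrix_inv A)" and ?e = "spec_norm (mat 1 - transpose A ** A)"
  define v where "v = x - P *v x"
  define p where "p = Q *v (A *v v)"
  obtain w where w: "w \<in> Z" "p = A *v w"
    using image is_orth_proj_in[OF proj_Q] unfolding p_def by blast
  have inv_p: "matrix_inv A *v p = w" using w matrix_inv_mult_vec_cancel[OF inv] by simp
  have nw: "norm w \<le> ?M * norm p" using inv_p spec_norm_mult_vec_le by metis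
  have vw: "v \<bullet> w = 0" unfolding v_def by (rule is_orth_proj_orthogonal[OF proj_P w(1)])
  have "(norm p)\<^sup>2 = (A *v v) \<bullet> p" unfolding p_def by (rule is_orth_proj_norm_sq[OF proj_Q])
  also have "\<dots> = - (v \<bullet> ((mat 1 - transpose A ** A) *v w))"
    using vw w(2) by (simp add: inner_matrix_vector_transpose matrix_vector_mult_diff_rdistrib
        matrix_vector_mul_assoc inner_diff_right)
  also have "\<dots> \<le> ?e * norm v * norm w"
    using inner_le_spec_norm[of "-v" "mat 1 - transpose A ** A" w] by simp
  also have "\<dots> \<le> ?e * norm v * (?M * norm p)"
    using nw by (simp add: mult_left_mono spec_norm_nonneg)
  finally have "norm p * norm p \<le> norm p * (?e * ?M * norm v)"
    by (simp add: power2_eq_square algebra_simps)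
  hence np: "norm p \<le> ?e * ?M * norm v"
    using spec_norm_nonneg by (cases "norm p = 0") (auto intro!: mult_nonneg_nonneg)
  have "norm (matrix_inv A *v p) \<le> ?M * norm p" by (rule spec_norm_mult_vec_le)
  also have "\<dots> \<le> ?M * (?e * ?M * norm v)"
    by (intro mult_left_mono np spec_norm_nonneg)
  also have "\<dots> \<le> ?M * (?e * ?M * norm x)"
    unfolding v_def
    by (intro mult_left_mono mult_nonneg_nonneg is_orth_proj_norm_diff_le[OF proj_P] spec_norm_nonneg)
  finally show "norm ((matrix_inv A ** Q ** A - P) *v x) \<le> ?M\<^sup>2 * ?e * norm x"
    unfolding pullback_proj_diff_apply p_def v_def by (simp only: power2_eq_square mult_ac)
qed

end

lemma combine_pullback_bounds:
  fixes L N M e :: real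
  assumes "0 \<le> N" "0 \<le> M" "0 \<le> e"
    and L_cond: "L \<le> N * M" and L_gram: "L \<le> M\<^sup>2 * e"
    and inv_bound: "M\<^sup>2 * (1 - e) \<le> 1" and norm_bound: "1 - N\<^sup>2 \<le> e"
  shows "L \<le> (1 + (N * M)\<^sup>2) * e"
proof (cases "M\<^sup>2 \<le> 1 + (N * M)\<^sup>2")
  case True
  then show ?thesis using L_gram mult_right_mono[OF True \<open>0 \<le> e\<close>] by linarith
next
  case False
  define t where "t = (N * M)\<^sup>2"
  have t0: "0 \<le> t" and Mt: "1 + t < M\<^sup>2" using False unfolding t_def by simp_all
  have MN: "1 < M\<^sup>2 * (1 - N\<^sup>2)" using Mt unfolding t_def by (simp add: power_mult_distrib algebra_simps)
  hence "0 \<le> 1 - N\<^sup>2" by (smt (verit) mult_nonneg_nonpos zero_le_power2)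
  have "1 \<le> (1 + t) * (1 - N\<^sup>2)"
    using mult_left_mono[OF less_imp_le[OF MN], of "N\<^sup>2"]
    unfolding t_def by (simp add: power_mult_distrib algebra_simps)
  also have "\<dots> \<le> (1 + t) * e" using norm_bound t0 by (simp add: mult_left_mono)
  finally have ge_1: "1 \<le> (1 + t) * e" .
  have "M\<^sup>2 * t \<le> (1 + t) * (M\<^sup>2 - 1)" using Mt t0 by (simp add: algebra_simps)
  also have "\<dots> \<le> (1 + t) * (M\<^sup>2 * e)"
    using inv_bound t0 by (intro mult_left_mono) (simp_all add: algebra_simps)
  finally have "M\<^sup>2 * t \<le> M\<^sup>2 * ((1 + t) * e)" by (simp add: algebra_simps)
  moreover have "0 < M\<^sup>2" using Mt t0 by linarith
  ultimately have ge_t: "t \<le> (1 + t) * e" by (simp add: mult_le_cancel_left_pos)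
  have "N * M \<le> max 1 t"
    using mult_left_mono[of 1 "N * M" "N * M"] \<open>0 \<le> N\<close> \<open>0 \<le> M\<close>
    unfolding t_def by (cases "N * M \<le> 1") (auto simp: power2_eq_square)
  with ge_1 ge_t L_cond show ?thesis unfolding t_def by linarith
qed

lemma thetabar_shift:
  "thetabar (\<lambda>i. \<theta> (a + i)) (Suc k) = thetabar (\<lambda>i. \<theta> (Suc a + i)) k ** \<theta> a"
  by (induction k) (simp_all add: matrix_mul_assoc)

lemma invertible_thetabar:
  fixes \<theta> :: "nat \<Rightarrow> real^'n^'n"
  shows "(\<And>i. i < k \<Longrightarrow> invertible (\<theta> i)) \<Longrightarrow> invertible (thetabar \<theta> k)"
proof (induction k)
  case 0
  then show ?case by (simp add: invertible_def)
next
  case (Suc k)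
  then show ?case by (simp add: invertible_mult)
qed

lemma image_thetabar:
  fixes Z :: "nat \<Rightarrow> (real^'n) set" and \<theta> :: "nat \<Rightarrow> real^'n^'n"
  assumes "\<And>t. t < k \<Longrightarrow> (\<lambda>x. \<theta> t *v x) ` Z t = Z (Suc t)"
  shows "(\<lambda>x. thetabar \<theta> k *v x) ` Z 0 = Z k"
  using assms
proof (induction k)
  case (Suc k)
  have "(\<lambda>x. thetabar \<theta> (Suc k) *v x) ` Z 0 = (\<lambda>x. \<theta> k *v x) ` (\<lambda>x. thetabar \<theta> k *v x) ` Z 0"
    by (auto simp: matrix_vector_mul_assoc image_iff)
  then show ?case using Suc by simp
qed simp

lemma Pts_eq_conj:
  fixes \<theta> P :: "nat \<Rightarrow> real^'n^'n"
  assumes "\<And>i. i < t \<Longrightarrow> invertible (\<theta> i)" and "k \<le> t"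
  shows "Pts \<theta> P t k
           = matrix_inv (thetabar (\<lambda>i. \<theta> (t - k + i)) k) ** P t ** thetabar (\<lambda>i. \<theta> (t - k + i)) k"
  using \<open>k \<le> t\<close>
proof (induction k)
  case 0
  then show ?case by (simp add: matrix_inv_mat_1)
next
  case (Suc k)
  define a where "a = t - Suc k"
  define G where "G = thetabar (\<lambda>i. \<theta> (Suc a + i)) k"
  have ta: "t - k = Suc a" using Suc.prems unfolding a_def by simp
  have "invertible (\<theta> a)" using assms Suc.prems unfolding a_def by simp
  moreover have "invertible G" unfolding G_def
    by (rule invertible_thetabar) (use assms Suc.prems ta in auto)
  moreover have "Pts \<theta> P t (Suc k) = matrix_inv (\<theta> a) ** (matrix_inv G ** P t ** G) ** \<theta> a"
    using Suc ta unfolding a_def G_def by (simp add: diff_diff_add)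
  ultimately have "Pts \<theta> P t (Suc k) = matrix_inv (G ** \<theta> a) ** P t ** (G ** \<theta> a)"
    by (simp add: matrix_inv_mult matrix_mul_assoc)
  then show ?case unfolding G_def a_def by (simp only: thetabar_shift)
qed

lemma Pts_diag:
  fixes \<theta> P :: "nat \<Rightarrow> real^'n^'n"
  assumes "\<And>i. i < s \<Longrightarrow> invertible (\<theta> i)"
  shows "Pts \<theta> P s s = matrix_inv (thetabar \<theta> s) ** P s ** thetabar \<theta> s"
  using Pts_eq_conj[OF assms order_refl] by simp

theorem mainTheorem7:
  fixes Z :: "nat \<Rightarrow> (real^'d) set"
    and P :: "nat \<Rightarrow> real^'d^'d"
    and \<theta> :: "nat \<Rightarrow> real^'d^'d"
    and r T :: nat
  assumes "1 \<le> r" and "r \<le> CARD('d)" and "1 \<le> T"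
    and "\<And>t. t \<le> T \<Longrightarrow> subspace (Z t) \<and> dim (Z t) = r"
    and "\<And>t. t \<le> T \<Longrightarrow> is_orth_proj (P t) (Z t)"
    and "\<And>t. t < T \<Longrightarrow> invertible (\<theta> t)"
    and "\<And>t. t < T \<Longrightarrow> (\<lambda>x. \<theta> t *v x) ` Z t = Z (Suc t)"
    and "s \<le> T"
  shows "spec_norm (Pts \<theta> P s s - P 0)
           \<le> (1 + (cond_num (thetabar \<theta> s))\<^sup>2)
             * spec_norm (mat 1 - transpose (thetabar \<theta> s) ** thetabar \<theta> s)"
proof -
  let ?A = "thetabar \<theta> s"
  have inv_\<theta>: "\<And>i. i < s \<Longrightarrow> invertible (\<theta> i)" using assms(6,8) by simp
  have inv: "invertible ?A" by (rule invertible_thetabar[OF inv_\<theta>])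
  have Pts_eq: "Pts \<theta> P s s = matrix_inv ?A ** P s ** ?A" by (rule Pts_diag[OF inv_\<theta>])
  have image: "(\<lambda>x. ?A *v x) ` Z 0 = Z s" by (rule image_thetabar) (meson assms(7,8) less_le_trans)
  have subspace: "subspace (Z s)" using assms(4,8) by simp
  have proj_0: "is_orth_proj (P 0) (Z 0)" and proj_s: "is_orth_proj (P s) (Z s)"
    using assms(5,8) by simp_all
  note pullback = inv subspace proj_0 proj_s image
  have "spec_norm (matrix_inv ?A ** P s ** ?A - P 0) \<le> spec_norm ?A * spec_norm (matrix_inv ?A)"
    by (rule spec_norm_pullback_proj_diff_le_cond[OF pullback])
  moreover have "spec_norm (matrix_inv ?A ** P s ** ?A - P 0)
      \<le> (spec_norm (matrix_inv ?A))\<^sup>2 * spec_norm (mat 1 - transpose ?A ** ?A)"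
    by (rule spec_norm_pullback_proj_diff_le_gram[OF pullback])
  ultimately show ?thesis
    unfolding Pts_eq cond_num_def
    by (intro combine_pullback_bounds spec_norm_nonneg spec_norm_matrix_inv_sq_le[OF inv]
        one_minus_spec_norm_sq_le)
qed

end
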